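(* Let $k\ge 3$, $n_1,\dots,n_k\ge 2$ and $r\in[k]$. The LC orbit of the clique-star $CS^r_{n_1,\dots,n_k}$ has size $$|\mathcal{O}(CS^r_{n_1,\dots,n_k})|=\sum_{\substack{I\subseteq[k]\\ |I|\text{ odd}}}\prod_{i\in I}n_i+\sum_{j=1}^k\prod_{i\in[k]\setminus\{j\}}(n_i+1).$$
   Context: $[k]=\{1,\dots,k\}$. The clique-star $CS^r_{n_1,\dots,n_k}$ has vertex set $U_1\sqcup\cdots\sqcup U_k$ with $|U_i|=n_i$; each $U_i$ is a clique, every vertex of $U_r$ is adjacent to every vertex of $U_i$ for all $i\ne r$, and there are no edges between $U_i$ and $U_l$ for distinct $i,l\ne r$. The local complement $c_v(G)$ complements the edges among the neighbours of $v$. $\mathcal{O}(G)$ is the set of all graphs on the labelled vertex set $V(G)$ obtainable from $G$ by finite sequences of local complements (labelled graphs are counted). *)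

theory Defs
  imports Main
begin

text \<open>Simple graphs on a vertex set V are represented by their edge set:
  a set of 2-element subsets of V.\<close>

definition nbhd :: "'a set set \<Rightarrow> 'a \<Rightarrow> 'a set" where
  "nbhd E v = {u. {u, v} \<in> E \<and> u \<noteq> v}"

definition local_comp :: "'a set set \<Rightarrow> 'a \<Rightarrow> 'a set set" where
  "local_comp E v =
     (E - {{x, y} | x y. x \<in> nbhd E v \<and> y \<in> nbhd E v \<and> x \<noteq> y})
     \<union> ({{x, y} | x y. x \<in> nbhd E v \<and> y \<in> nbhd E v \<and> x \<noteq> y} - E)"

inductive_set lc_orbit :: "'a set \<Rightarrow> 'a set set \<Rightarrow> 'a set set set"
  for V :: "'a set" and E :: "'a set set" where
  refl: "E \<in> lc_orbit V E"
| step: "F \<in> lc_orbit V E \<Longrightarrow> v \<in> V \<Longrightarrow> local_comp F v \<in> lc_orbit V E"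

text \<open>Clique-star CS^r_{n_1..n_k}: vertices (i,a) with i \<in> {1..k}, a < n i,
  U_i = {(i,a) | a < n i}.\<close>
definition cs_vertices :: "nat \<Rightarrow> (nat \<Rightarrow> nat) \<Rightarrow> (nat \<times> nat) set" where
  "cs_vertices k n = {(i, a). i \<in> {1..k} \<and> a < n i}"

definition clique_star :: "nat \<Rightarrow> (nat \<Rightarrow> nat) \<Rightarrow> nat \<Rightarrow> (nat \<times> nat) set set" where
  "clique_star k n r =
     {{x, y} | x y. x \<in> cs_vertices k n \<and> y \<in> cs_vertices k n \<and> x \<noteq> y \<and>
        (fst x = fst y \<or> fst x = r \<or> fst y = r)}"

end

theory Submission
  imports Defs "HOL-Library.FuncSet"
begin

text \<open>Every graph in the orbit is a block graph: it is described by a quotient graph \<open>H\<close> on the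
  block indices together with a state for each block \<open>U\<^sub>i\<close>, namely a clique, an independent
  set, or a star with center \<open>c\<close> in which only \<open>c\<close> is attached to the other blocks; two blocks
  are completely joined along their attached vertices iff they are adjacent in \<open>H\<close>.
  Local complementation at an attached vertex of \<open>U\<^sub>i\<close> locally complements \<open>H\<close> at \<open>i\<close>,
  complements the blocks adjacent to \<open>i\<close> and toggles \<open>U\<^sub>i\<close> between clique and star; at an
  unattached vertex it does nothing. Starting from the clique-star, where \<open>H\<close> is a star centered
  at \<open>r\<close> and all blocks are cliques, one reaches exactly
  \<^item> the graphs whose quotient is a star centered at some \<open>j\<close>, each leaf being a clique or a star
    (\<open>n\<^sub>l + 1\<close> choices), the center block being a clique or independent according to the parity
    of the number of star leaves;
  \<^item> the graphs whose quotient is complete, with an odd set \<open>I\<close> of star blocks (\<open>n\<^sub>i\<close>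
    choices of center each) and all other blocks independent.
  For \<open>k \<ge> 3\<close> and all \<open>n\<^sub>i \<ge> 2\<close> the quotient and the block states can be read off the graph,
  so the orbit is in bijection with these parameters.\<close>

definition edges_of :: "'a set \<Rightarrow> ('a \<Rightarrow> 'a \<Rightarrow> bool) \<Rightarrow> 'a set set" where
  "edges_of V R = {{x, y} | x y. x \<in> V \<and> y \<in> V \<and> x \<noteq> y \<and> R x y}"

lemma edges_of_cong:
  assumes "\<And>x y. x \<in> V \<Longrightarrow> y \<in> V \<Longrightarrow> x \<noteq> y \<Longrightarrow> R x y = R' x y"
  shows "edges_of V R = edges_of V R'"
  unfolding edges_of_def using assms by blast

lemma doubleton_in_edges_of_iff:
  assumes "symp R" "x \<noteq> y"
  shows "{x, y} \<in> edges_of V R \<longleftrightarrow> x \<in> V \<and> y \<in> V \<and> R x y"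
  using assms unfolding edges_of_def by (auto simp: doubleton_eq_iff dest: sympD)

lemma edges_of_eqD:
  assumes "edges_of V R = edges_of V R'" "symp R" "symp R'" "x \<in> V" "y \<in> V" "x \<noteq> y"
  shows "R x y = R' x y"
  using assms doubleton_in_edges_of_iff[of R x y V] doubleton_in_edges_of_iff[of R' x y V] by auto

lemma local_comp_edges_of:
  assumes "symp R"
  shows "local_comp (edges_of V R) v =
           edges_of V (\<lambda>x y. R x y \<noteq> (R x v \<and> R y v \<and> x \<noteq> v \<and> y \<noteq> v \<and> v \<in> V))"
    (is "_ = edges_of V ?R")
proof (rule set_eqI)
  fix e
  have sym': "symp ?R" using assms by (auto simp: symp_def)
  have nbhd: "nbhd (edges_of V R) v = {u \<in> V. v \<in> V \<and> u \<noteq> v \<and> R u v}"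
    unfolding nbhd_def using doubleton_in_edges_of_iff[OF assms] by auto
  show "e \<in> local_comp (edges_of V R) v \<longleftrightarrow> e \<in> edges_of V ?R"
  proof (cases "\<exists>x y. e = {x, y} \<and> x \<noteq> y")
    case True
    then obtain x y where e: "e = {x, y}" "x \<noteq> y" by blast
    then show ?thesis
      unfolding local_comp_def nbhd
      using doubleton_in_edges_of_iff[OF assms e(2)] doubleton_in_edges_of_iff[OF sym' e(2)]
      by (auto simp: doubleton_eq_iff dest: sympD[OF assms])
  next
    case False
    then show ?thesis unfolding local_comp_def edges_of_def by blast
  qed
qed

datatype block = Clique | Indep | Star nat

fun block_adj :: "block \<Rightarrow> nat \<Rightarrow> nat \<Rightarrow> bool" where
  "block_adj Clique a b = True"
| "block_adj Indep a b = False"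
| "block_adj (Star c) a b = (a = c \<or> b = c)"

fun attached :: "block \<Rightarrow> nat \<Rightarrow> bool" where
  "attached (Star c) a = (a = c)"
| "attached _ a = True"

text \<open>A star block has a single attached vertex, so complementing among attached vertices leaves
  it unchanged.\<close>
fun compl_block :: "block \<Rightarrow> block" where
  "compl_block Clique = Indep"
| "compl_block Indep = Clique"
| "compl_block (Star c) = Star c"

text \<open>Only meaningful at an attached vertex \<open>a\<close>; for \<open>Star c\<close> this means \<open>a = c\<close>.\<close>
fun local_comp_block :: "block \<Rightarrow> nat \<Rightarrow> block" where
  "local_comp_block Clique a = Star a"
| "local_comp_block Indep a = Indep"
| "local_comp_block (Star c) a = Clique"

fun center :: "block \<Rightarrow> nat" where
  "center (Star c) = c"
| "center _ = 0"

definition block_states :: "nat \<Rightarrow> block set" where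
  "block_states m = insert Clique (insert Indep (Star ` {..<m}))"

definition block_rel :: "('i \<Rightarrow> 'i \<Rightarrow> bool) \<Rightarrow> ('i \<Rightarrow> block) \<Rightarrow> 'i \<times> nat \<Rightarrow> 'i \<times> nat \<Rightarrow> bool" where
  "block_rel H s x y =
     (if fst x = fst y then block_adj (s (fst x)) (snd x) (snd y)
      else H (fst x) (fst y) \<and> attached (s (fst x)) (snd x) \<and> attached (s (fst y)) (snd y))"

lemma block_adj_commute: "block_adj t a b = block_adj t b a"
  by (cases t) auto

lemma symp_block_rel: "symp H \<Longrightarrow> symp (block_rel H s)"
  unfolding symp_def block_rel_def using block_adj_commute by metis

lemma local_comp_block_rel:
  assumes "symp H" "(i, a) \<in> V" "attached (s i) a"
  shows "local_comp (edges_of V (block_rel H s)) (i, a) =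
    edges_of V (block_rel (\<lambda>l m. H l m \<noteq> (H i l \<and> H i m \<and> l \<noteq> i \<and> m \<noteq> i))
      (\<lambda>l. if l = i then local_comp_block (s i) a else if H i l then compl_block (s l) else s l))"
proof -
  have H_commute: "H l m = H m l" for l m
    using assms(1) by (auto dest: sympD)
  show ?thesis
    unfolding local_comp_edges_of[OF symp_block_rel[OF assms(1)]]
    apply (rule edges_of_cong, unfold split_paired_all)
    subgoal for l b m b'
      using assms(2,3)
      by (cases "s i"; cases "s l"; cases "s m") (auto simp: block_rel_def H_commute)
    done
qed

lemma local_comp_block_rel_unattached:
  assumes "symp H" "\<not> attached (s i) a"
  shows "local_comp (edges_of V (block_rel H s)) (i, a) = edges_of V (block_rel H s)"
  unfolding local_comp_edges_of[OF symp_block_rel[OF assms(1)]]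
  apply (rule edges_of_cong, unfold split_paired_all)
  subgoal for l b m b'
    using assms(2) by (cases "s i"; cases "s l"; cases "s m") (auto simp: block_rel_def)
  done

lemma block_eqI:
  assumes "2 \<le> m" "t \<in> block_states m" "t' \<in> block_states m"
    and "\<And>a. a < m \<Longrightarrow> attached t a = attached t' a"
    and "\<And>a b. a < m \<Longrightarrow> b < m \<Longrightarrow> a \<noteq> b \<Longrightarrow> block_adj t a b = block_adj t' a b"
  shows "t = t'"
  \<comment> \<open>Clique and Indep differ on the pair 0, 1; a star has 0 or 1 unattached.\<close>
  using assms(1-3) assms(4)[of 0] assms(4)[of 1] assms(5)[of 0 1]
  by (cases t; cases t') (auto simp: block_states_def dest: assms(4))

lemma attached_vertex_exists: "0 < m \<Longrightarrow> t \<in> block_states m \<Longrightarrow> \<exists>a<m. attached t a"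
  by (cases t) (auto simp: block_states_def)

lemma block_rel_quotient_iff:
  assumes "l \<noteq> m" "0 < n l" "0 < n m" "s l \<in> block_states (n l)" "s m \<in> block_states (n m)"
  shows "H l m \<longleftrightarrow> (\<exists>a<n l. \<exists>b<n m. block_rel H s (l, a) (m, b))"
  using assms attached_vertex_exists[OF assms(2,4)] attached_vertex_exists[OF assms(3,5)]
  unfolding block_rel_def by auto

lemma block_rel_determines_quotient:
  assumes "edges_of (SIGMA i:B. {..<n i}) (block_rel H s) =
           edges_of (SIGMA i:B. {..<n i}) (block_rel H' s')"
    and "symp H" "symp H'" "\<And>i. i \<in> B \<Longrightarrow> 0 < n i"
    and "s \<in> Pi B (\<lambda>i. block_states (n i))" "s' \<in> Pi B (\<lambda>i. block_states (n i))"
    and "l \<in> B" "m \<in> B" "l \<noteq> m"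
  shows "H l m = H' l m"
proof -
  have "block_rel H s (l, a) (m, b) = block_rel H' s' (l, a) (m, b)" if "a < n l" "b < n m" for a b
    using edges_of_eqD[OF assms(1) symp_block_rel[OF assms(2)] symp_block_rel[OF assms(3)]]
      that assms(7-9) by auto
  moreover have "0 < n l" "0 < n m" using assms(4,7,8) by auto
  moreover have "s l \<in> block_states (n l)" "s m \<in> block_states (n m)"
    "s' l \<in> block_states (n l)" "s' m \<in> block_states (n m)"
    using assms(5-8) by auto
  ultimately show ?thesis
    using block_rel_quotient_iff[of l m n s H] block_rel_quotient_iff[of l m n s' H'] assms(9)
    by auto
qed

lemma block_rel_determines_states:
  assumes eq: "edges_of (SIGMA i:B. {..<n i}) (block_rel H s) =
               edges_of (SIGMA i:B. {..<n i}) (block_rel H' s')"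
    and sym: "symp H" "symp H'" and n: "\<And>i. i \<in> B \<Longrightarrow> 2 \<le> n i"
    and states: "s \<in> Pi B (\<lambda>i. block_states (n i))" "s' \<in> Pi B (\<lambda>i. block_states (n i))"
    and lm: "l \<in> B" "m \<in> B" "l \<noteq> m" "H l m"
  shows "s l = s' l"
proof -
  have rel: "block_rel H s x y = block_rel H' s' x y"
    if "x \<in> (SIGMA i:B. {..<n i})" "y \<in> (SIGMA i:B. {..<n i})" "x \<noteq> y" for x y
    using edges_of_eqD[OF eq symp_block_rel[OF sym(1)] symp_block_rel[OF sym(2)] that] .
  have pos: "0 < n i" if "i \<in> B" for i
    using n[OF that] by simp
  have "H' l m"
    using block_rel_determines_quotient[OF eq sym pos states lm(1-3)] lm(4) by simp
  have attached_iff: "attached (t l) a \<longleftrightarrow> (\<exists>b<n m. block_rel G t (l, a) (m, b))"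
    if "G l m" "t \<in> Pi B (\<lambda>i. block_states (n i))" for G t a
    using attached_vertex_exists[of "n m" "t m"] that lm(2,3) n[OF lm(2)]
    unfolding block_rel_def by auto
  show ?thesis
  proof (rule block_eqI[OF n[OF lm(1)]])
    show "s l \<in> block_states (n l)" "s' l \<in> block_states (n l)"
      using states lm(1) by auto
    show "attached (s l) a = attached (s' l) a" if "a < n l" for a
      using attached_iff[where G = H, OF lm(4) states(1)]
        attached_iff[where G = H', OF \<open>H' l m\<close> states(2)] rel that lm
      by auto
    show "block_adj (s l) a b = block_adj (s' l) a b" if "a < n l" "b < n l" "a \<noteq> b" for a b
      using rel[of "(l, a)" "(l, b)"] that lm(1) unfolding block_rel_def by auto
  qed
qed

lemma even_card_Diff_singleton_iff:
  assumes "finite I" "odd (card I)"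
  shows "even (card (I - {i})) \<longleftrightarrow> i \<in> I"
  using assms by (cases "i \<in> I") (auto simp: card_Diff_singleton)

lemma cs_vertices_eq_Sigma: "cs_vertices k n = (SIGMA i:{1..k}. {..<n i})"
  unfolding cs_vertices_def by auto

lemma ex_index_avoiding:
  fixes k a b :: nat
  assumes "3 \<le> k"
  shows "\<exists>m\<in>{1..k}. m \<noteq> a \<and> m \<noteq> b"
proof -
  have "\<exists>m\<in>{1, 2, 3 :: nat}. m \<noteq> a \<and> m \<noteq> b" by auto
  moreover have "{1, 2, 3} \<subseteq> {1..k}" using assms by auto
  ultimately show ?thesis by blast
qed

context
  fixes k :: nat and n :: "nat \<Rightarrow> nat"
begin

definition block_graph :: "(nat \<Rightarrow> nat \<Rightarrow> bool) \<Rightarrow> (nat \<Rightarrow> block) \<Rightarrow> (nat \<times> nat) set set" where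
  "block_graph H s = edges_of (cs_vertices k n) (block_rel H s)"

lemma block_graph_cong:
  assumes "\<And>l m. l \<in> {1..k} \<Longrightarrow> m \<in> {1..k} \<Longrightarrow> l \<noteq> m \<Longrightarrow> H l m = H' l m"
    and "\<And>l. l \<in> {1..k} \<Longrightarrow> s l = s' l"
  shows "block_graph H s = block_graph H' s'"
  unfolding block_graph_def
  by (rule edges_of_cong) (auto simp: block_rel_def cs_vertices_def assms)

lemma local_comp_block_graph:
  assumes "symp H" "i \<in> {1..k}" "a < n i" "attached (s i) a"
  shows "local_comp (block_graph H s) (i, a) =
    block_graph (\<lambda>l m. H l m \<noteq> (H i l \<and> H i m \<and> l \<noteq> i \<and> m \<noteq> i))
      (\<lambda>l. if l = i then local_comp_block (s i) a else if H i l then compl_block (s l) else s l)"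
  unfolding block_graph_def using assms by (intro local_comp_block_rel) (auto simp: cs_vertices_def)

lemma local_comp_block_graph_unattached:
  "symp H \<Longrightarrow> \<not> attached (s i) a \<Longrightarrow> local_comp (block_graph H s) (i, a) = block_graph H s"
  unfolding block_graph_def by (rule local_comp_block_rel_unattached)

lemma block_graph_eqD:
  assumes "block_graph H s = block_graph H' s'" "symp H" "symp H'"
    and "\<And>i. i \<in> {1..k} \<Longrightarrow> 2 \<le> n i"
    and "s \<in> Pi {1..k} (\<lambda>i. block_states (n i))" "s' \<in> Pi {1..k} (\<lambda>i. block_states (n i))"
    and "l \<in> {1..k}" "m \<in> {1..k}" "l \<noteq> m"
  shows "H l m = H' l m" and "H l m \<Longrightarrow> s l = s' l"
proof -
  have eq: "edges_of (SIGMA i:{1..k}. {..<n i}) (block_rel H s) =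
            edges_of (SIGMA i:{1..k}. {..<n i}) (block_rel H' s')"
    using assms(1) unfolding block_graph_def cs_vertices_eq_Sigma .
  show "H l m = H' l m"
    using assms(4) by (intro block_rel_determines_quotient[OF eq assms(2,3) _ assms(5-9)]) fastforce
  show "H l m \<Longrightarrow> s l = s' l"
    by (rule block_rel_determines_states[OF eq assms(2-9)])
qed

definition leaf_states :: "nat \<Rightarrow> block set" where
  "leaf_states l = insert Clique (Star ` {..<n l})"

definition star_leaves :: "nat \<Rightarrow> (nat \<Rightarrow> block) \<Rightarrow> nat set" where
  "star_leaves j f = {l \<in> {1..k} - {j}. f l \<noteq> Clique}"

text \<open>Every change of a leaf complements the center block, so it records the parity of the
  number of star leaves.\<close>
definition star_states :: "nat \<Rightarrow> (nat \<Rightarrow> block) \<Rightarrow> nat \<Rightarrow> block" where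
  "star_states j f = f(j := if even (card (star_leaves j f)) then Clique else Indep)"

definition star_graph :: "nat \<Rightarrow> (nat \<Rightarrow> block) \<Rightarrow> (nat \<times> nat) set set" where
  "star_graph j f = block_graph (\<lambda>l m. l = j \<or> m = j) (star_states j f)"

definition complete_states :: "nat set \<Rightarrow> (nat \<Rightarrow> nat) \<Rightarrow> nat \<Rightarrow> block" where
  "complete_states I c l = (if l \<in> I then Star (c l) else Indep)"

definition complete_graph :: "nat set \<Rightarrow> (nat \<Rightarrow> nat) \<Rightarrow> (nat \<times> nat) set set" where
  "complete_graph I c = block_graph (\<lambda>_ _. True) (complete_states I c)"

definition odd_subsets :: "nat set set" where
  "odd_subsets = {I. I \<subseteq> {1..k} \<and> odd (card I)}"

definition star_graphs :: "(nat \<times> nat) set set set" where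
  "star_graphs = {star_graph j f | j f. j \<in> {1..k} \<and> f \<in> Pi ({1..k} - {j}) leaf_states}"

definition complete_graphs :: "(nat \<times> nat) set set set" where
  "complete_graphs = {complete_graph I c | I c. I \<in> odd_subsets \<and> c \<in> Pi I (\<lambda>i. {..<n i})}"

text \<open>The star blocks after local complementation at the center: the former star leaves, and the
  center itself if it was a clique.\<close>
definition stars_after_center :: "nat \<Rightarrow> (nat \<Rightarrow> block) \<Rightarrow> nat set" where
  "stars_after_center j f = star_leaves j f \<union> (if even (card (star_leaves j f)) then {j} else {})"

lemma symp_star_quotient: "symp (\<lambda>l m. l = j \<or> m = j)"
  by (auto simp: symp_def)

lemma symp_complete_quotient: "symp (\<lambda>_ _. True)"
  by (auto simp: symp_def)

lemma finite_star_leaves: "finite (star_leaves j f)"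
  unfolding star_leaves_def by simp

lemma star_graph_cong:
  assumes "\<And>l. l \<in> {1..k} - {j} \<Longrightarrow> f l = g l"
  shows "star_graph j f = star_graph j g"
proof -
  have "star_leaves j f = star_leaves j g"
    using assms unfolding star_leaves_def by auto
  then show ?thesis
    unfolding star_graph_def using assms by (intro block_graph_cong) (auto simp: star_states_def)
qed

lemma complete_graph_cong:
  assumes "\<And>i. i \<in> I \<Longrightarrow> c i = c' i"
  shows "complete_graph I c = complete_graph I c'"
  unfolding complete_graph_def using assms
  by (intro block_graph_cong) (auto simp: complete_states_def)

lemma stars_after_center_in_odd_subsets:
  assumes "j \<in> {1..k}"
  shows "stars_after_center j f \<in> odd_subsets"
proof -
  have "j \<notin> star_leaves j f" "star_leaves j f \<subseteq> {1..k}"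
    unfolding star_leaves_def by auto
  then show ?thesis
    using assms finite_star_leaves[of j f]
    unfolding odd_subsets_def stars_after_center_def by auto
qed

lemma star_centers_in_Pi:
  assumes "f \<in> Pi ({1..k} - {j}) leaf_states" "a < n j"
  shows "(\<lambda>l. if l = j then a else center (f l)) \<in> Pi (stars_after_center j f) (\<lambda>i. {..<n i})"
proof
  fix l assume "l \<in> stars_after_center j f"
  then have "l = j \<or> l \<in> {1..k} - {j} \<and> f l \<noteq> Clique"
    by (auto simp: stars_after_center_def star_leaves_def split: if_splits)
  then show "(if l = j then a else center (f l)) \<in> {..<n l}"
    using Pi_mem[OF assms(1), of l] assms(2) by (auto simp: leaf_states_def)
qed

lemma stars_in_leaf_states:
  "c \<in> Pi I (\<lambda>i. {..<n i}) \<Longrightarrow>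
    (\<lambda>l. if l \<in> I then Star (c l) else Clique) \<in> Pi ({1..k} - {j}) leaf_states"
  by (auto simp: leaf_states_def Pi_iff)

lemma star_leaves_of_stars:
  assumes "I \<subseteq> {1..k}"
  shows "star_leaves j (\<lambda>l. if l \<in> I then Star (c l) else Clique) = I - {j}"
  using assms unfolding star_leaves_def by auto

lemma even_card_star_leaves_update:
  assumes "i \<in> {1..k}" "i \<noteq> j" "f i \<in> leaf_states i"
  shows "even (card (star_leaves j (f(i := local_comp_block (f i) a)))) \<longleftrightarrow>
           odd (card (star_leaves j f))"
proof (cases "f i = Clique")
  case True
  then have "star_leaves j (f(i := local_comp_block (f i) a)) = insert i (star_leaves j f)"
    "i \<notin> star_leaves j f"
    using assms unfolding star_leaves_def by auto
  then show ?thesis using finite_star_leaves by simp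
next
  case False
  then obtain c where "f i = Star c"
    using assms(3) unfolding leaf_states_def by auto
  then have "star_leaves j f = insert i (star_leaves j (f(i := local_comp_block (f i) a)))"
    "i \<notin> star_leaves j (f(i := local_comp_block (f i) a))"
    using assms unfolding star_leaves_def by auto
  then show ?thesis using finite_star_leaves by (metis card_insert_disjoint even_Suc)
qed

lemma local_comp_star_graph_center:
  assumes "j \<in> {1..k}" "f \<in> Pi ({1..k} - {j}) leaf_states" "a < n j"
  shows "local_comp (star_graph j f) (j, a) =
           complete_graph (stars_after_center j f) (\<lambda>l. if l = j then a else center (f l))"
  unfolding star_graph_def complete_graph_def
proof (rule trans[OF local_comp_block_graph[OF symp_star_quotient assms(1,3)] block_graph_cong])
  show "attached (star_states j f j) a"
    unfolding star_states_def by simp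
  fix l assume l: "l \<in> {1..k}"
  then have "l \<noteq> j \<Longrightarrow> f l \<in> leaf_states l" using assms(2) by auto
  with l show "(if l = j then local_comp_block (star_states j f j) a
              else if j = j \<or> l = j then compl_block (star_states j f l) else star_states j f l) =
           complete_states (stars_after_center j f) (\<lambda>l. if l = j then a else center (f l)) l"
    by (cases "f l") (auto simp: star_states_def complete_states_def stars_after_center_def
        star_leaves_def leaf_states_def)
qed auto

lemma local_comp_star_graph_leaf:
  assumes "i \<in> {1..k}" "i \<noteq> j" "a < n i" "f i \<in> leaf_states i" "attached (f i) a"
  shows "local_comp (star_graph j f) (i, a) = star_graph j (f(i := local_comp_block (f i) a))"
  unfolding star_graph_def
proof (rule trans[OF local_comp_block_graph[OF symp_star_quotient assms(1,3)] block_graph_cong])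
  show "attached (star_states j f i) a"
    using assms(2,5) unfolding star_states_def by simp
  fix l assume "l \<in> {1..k}"
  then show "(if l = i then local_comp_block (star_states j f i) a
              else if i = j \<or> l = j then compl_block (star_states j f l) else star_states j f l) =
           star_states j (f(i := local_comp_block (f i) a)) l"
    using assms(2) even_card_star_leaves_update[where f = f and a = a, OF assms(1,2,4)]
    by (auto simp: star_states_def)
qed (use assms(2) in auto)

lemma local_comp_complete_graph:
  assumes "I \<in> odd_subsets" "i \<in> {1..k}" "a < n i" "attached (complete_states I c i) a"
  shows "local_comp (complete_graph I c) (i, a) =
           star_graph i (\<lambda>l. if l \<in> I then Star (c l) else Clique)"
  unfolding star_graph_def complete_graph_def
proof (rule trans[OF local_comp_block_graph[where s = "complete_states I c",
        OF symp_complete_quotient assms(2-4)] block_graph_cong])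
  have "I \<subseteq> {1..k}" "finite I" "odd (card I)"
    using assms(1) unfolding odd_subsets_def by (auto intro: finite_subset)
  then have "even (card (star_leaves i (\<lambda>l. if l \<in> I then Star (c l) else Clique))) \<longleftrightarrow> i \<in> I"
    by (simp add: star_leaves_of_stars even_card_Diff_singleton_iff)
  then show "(if l = i then local_comp_block (complete_states I c i) a
              else if True then compl_block (complete_states I c l) else complete_states I c l) =
           star_states i (\<lambda>l. if l \<in> I then Star (c l) else Clique) l" for l
    by (auto simp: star_states_def complete_states_def)
qed auto

lemma local_comp_star_graph_in_families:
  assumes "j \<in> {1..k}" "f \<in> Pi ({1..k} - {j}) leaf_states" "i \<in> {1..k}" "a < n i"
  shows "local_comp (star_graph j f) (i, a) \<in> star_graphs \<union> complete_graphs"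
proof (cases "i = j")
  case True
  then show ?thesis
    using local_comp_star_graph_center[OF assms(1,2)] stars_after_center_in_odd_subsets[OF assms(1)]
      star_centers_in_Pi[OF assms(2)] assms(4)
    unfolding complete_graphs_def by blast
next
  case False
  then have leaf: "f i \<in> leaf_states i"
    using assms(2,3) by auto
  show ?thesis
  proof (cases "attached (f i) a")
    case True
    have "f(i := local_comp_block (f i) a) \<in> Pi ({1..k} - {j}) leaf_states"
      using assms(2,4) leaf True by (cases "f i") (auto simp: leaf_states_def Pi_iff)
    then show ?thesis
      using local_comp_star_graph_leaf[where f = f, OF assms(3) False assms(4) leaf True] assms(1)
      unfolding star_graphs_def by blast
  next
    case unattached: False
    have "local_comp (star_graph j f) (i, a) = star_graph j f"
      unfolding star_graph_def using unattached False
      by (intro local_comp_block_graph_unattached symp_star_quotient) (simp add: star_states_def)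
    then show ?thesis
      using assms(1,2) unfolding star_graphs_def by auto
  qed
qed

lemma local_comp_complete_graph_in_families:
  assumes "I \<in> odd_subsets" "c \<in> Pi I (\<lambda>i. {..<n i})" "i \<in> {1..k}" "a < n i"
  shows "local_comp (complete_graph I c) (i, a) \<in> star_graphs \<union> complete_graphs"
proof (cases "attached (complete_states I c i) a")
  case True
  then show ?thesis
    using local_comp_complete_graph[OF assms(1,3,4) True] stars_in_leaf_states[OF assms(2)] assms(3)
    unfolding star_graphs_def by blast
next
  case False
  then have "local_comp (complete_graph I c) (i, a) = complete_graph I c"
    unfolding complete_graph_def by (intro local_comp_block_graph_unattached symp_complete_quotient)
  then show ?thesis
    using assms(1,2) unfolding complete_graphs_def by auto
qed

lemma local_comp_graph_families_closed:
  assumes "F \<in> star_graphs \<union> complete_graphs" "v \<in> cs_vertices k n"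
  shows "local_comp F v \<in> star_graphs \<union> complete_graphs"
proof -
  obtain i a where v: "v = (i, a)" "i \<in> {1..k}" "a < n i"
    using assms(2) unfolding cs_vertices_def by auto
  show ?thesis
    using assms(1) local_comp_star_graph_in_families[OF _ _ v(2,3)]
      local_comp_complete_graph_in_families[OF _ _ v(2,3)]
    unfolding v(1) star_graphs_def complete_graphs_def by blast
qed

abbreviation orbit :: "nat \<Rightarrow> (nat \<times> nat) set set set" where
  "orbit r \<equiv> lc_orbit (cs_vertices k n) (clique_star k n r)"

lemma clique_star_eq_star_graph: "clique_star k n r = star_graph r (\<lambda>_. Clique)"
proof -
  have "star_states r (\<lambda>_. Clique) = (\<lambda>_. Clique)"
    unfolding star_states_def star_leaves_def by auto
  then show ?thesis
    unfolding clique_star_def star_graph_def block_graph_def edges_of_def block_rel_def by auto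
qed

lemma star_graph_at_root_in_orbit:
  assumes "f \<in> Pi ({1..k} - {r}) leaf_states"
  shows "star_graph r f \<in> orbit r"
  using assms
proof (induction "card (star_leaves r f)" arbitrary: f)
  case 0
  then have "star_leaves r f = {}"
    using finite_star_leaves by simp
  then have "star_graph r f = star_graph r (\<lambda>_. Clique)"
    unfolding star_leaves_def by (intro star_graph_cong) auto
  then show ?case
    using clique_star_eq_star_graph lc_orbit.refl by metis
next
  case (Suc m)
  then obtain i where i: "i \<in> star_leaves r f"
    by (metis card.empty ex_in_conv nat.distinct(1))
  then have i_block: "i \<in> {1..k}" "i \<noteq> r"
    unfolding star_leaves_def by auto
  then obtain a where a: "f i = Star a" "a < n i"
    using i Suc.prems unfolding star_leaves_def leaf_states_def by auto
  define g where "g = f(i := Clique)"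
  have g_leaves: "g \<in> Pi ({1..k} - {r}) leaf_states"
    using Suc.prems unfolding g_def leaf_states_def by (auto simp: Pi_iff)
  have "star_leaves r g = star_leaves r f - {i}"
    unfolding g_def star_leaves_def by auto
  then have "m = card (star_leaves r g)"
    using Suc.hyps(2) i finite_star_leaves by simp
  then have "star_graph r g \<in> orbit r"
    using Suc.hyps(1) g_leaves by blast
  moreover have "local_comp (star_graph r g) (i, a) = star_graph r f"
    using local_comp_star_graph_leaf[where f = g, OF i_block a(2)] a
    unfolding g_def leaf_states_def by (simp add: fun_upd_idem)
  moreover have "(i, a) \<in> cs_vertices k n"
    using i_block a unfolding cs_vertices_def by simp
  ultimately show ?case
    using lc_orbit.step by metis
qed

lemma complete_graph_in_orbit:
  assumes "\<And>i. i \<in> {1..k} \<Longrightarrow> 0 < n i" "r \<in> {1..k}"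
    and "I \<in> odd_subsets" "c \<in> Pi I (\<lambda>i. {..<n i})"
  shows "complete_graph I c \<in> orbit r"
proof -
  define f where "f = (\<lambda>l. if l \<in> I then Star (c l) else Clique)"
  define a where "a = (if r \<in> I then c r else 0)"
  have I: "I \<subseteq> {1..k}" "finite I" "odd (card I)"
    using assms(3) unfolding odd_subsets_def by (auto intro: finite_subset)
  have f_leaves: "f \<in> Pi ({1..k} - {r}) leaf_states"
    unfolding f_def by (rule stars_in_leaf_states[OF assms(4)])
  have a: "a < n r"
    using assms(1,2,4) unfolding a_def by auto
  have "stars_after_center r f = I"
    using I even_card_Diff_singleton_iff[OF I(2,3), of r]
    unfolding stars_after_center_def f_def star_leaves_of_stars[OF I(1)] by auto
  moreover have "complete_graph I (\<lambda>l. if l = r then a else center (f l)) = complete_graph I c"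
    by (rule complete_graph_cong) (auto simp: f_def a_def)
  ultimately have "local_comp (star_graph r f) (r, a) = complete_graph I c"
    using local_comp_star_graph_center[OF assms(2) f_leaves a] by simp
  moreover have "(r, a) \<in> cs_vertices k n"
    using assms(2) a unfolding cs_vertices_def by simp
  ultimately show ?thesis
    using lc_orbit.step[OF star_graph_at_root_in_orbit[OF f_leaves]] by metis
qed

lemma star_graph_in_orbit:
  assumes "\<And>i. i \<in> {1..k} \<Longrightarrow> 0 < n i" "r \<in> {1..k}"
    and "j \<in> {1..k}" "f \<in> Pi ({1..k} - {j}) leaf_states"
  shows "star_graph j f \<in> orbit r"
proof -
  define c where "c = (\<lambda>l. if l = j then 0 else center (f l))"
  have c: "c \<in> Pi (stars_after_center j f) (\<lambda>i. {..<n i})"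
    unfolding c_def using star_centers_in_Pi[OF assms(4)] assms(1,3) by blast
  have "local_comp (complete_graph (stars_after_center j f) c) (j, 0) =
          star_graph j (\<lambda>l. if l \<in> stars_after_center j f then Star (c l) else Clique)"
    using assms(1,3) stars_after_center_in_odd_subsets[OF assms(3)]
    by (intro local_comp_complete_graph) (auto simp: complete_states_def c_def)
  also have "\<dots> = star_graph j f"
  proof (rule star_graph_cong)
    fix l assume "l \<in> {1..k} - {j}"
    then show "(if l \<in> stars_after_center j f then Star (c l) else Clique) = f l"
      using Pi_mem[OF assms(4), of l]
      by (auto simp: stars_after_center_def star_leaves_def c_def leaf_states_def)
  qed
  finally show ?thesis
    using lc_orbit.step[OF complete_graph_in_orbit[OF assms(1,2)
          stars_after_center_in_odd_subsets c]] assms(1,3) unfolding cs_vertices_def by fastforce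
qed

lemma lc_orbit_clique_star_eq:
  assumes "\<And>i. i \<in> {1..k} \<Longrightarrow> 0 < n i" "r \<in> {1..k}"
  shows "orbit r = star_graphs \<union> complete_graphs"
proof
  show "orbit r \<subseteq> star_graphs \<union> complete_graphs"
  proof
    fix F assume "F \<in> orbit r"
    then show "F \<in> star_graphs \<union> complete_graphs"
    proof (induction rule: lc_orbit.induct)
      case refl
      have "(\<lambda>_. Clique) \<in> Pi ({1..k} - {r}) leaf_states"
        unfolding leaf_states_def by simp
      then show ?case
        using assms(2) unfolding clique_star_eq_star_graph star_graphs_def by blast
    next
      case (step F v)
      then show ?case by (intro local_comp_graph_families_closed)
    qed
  qed
  show "star_graphs \<union> complete_graphs \<subseteq> orbit r"
    unfolding star_graphs_def complete_graphs_def
    using star_graph_in_orbit[OF assms] complete_graph_in_orbit[OF assms] by blast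
qed

lemma star_states_in_block_states:
  "f \<in> Pi ({1..k} - {j}) leaf_states \<Longrightarrow> star_states j f \<in> Pi {1..k} (\<lambda>i. block_states (n i))"
  by (auto simp: star_states_def leaf_states_def block_states_def Pi_iff)

lemma complete_states_in_block_states:
  "c \<in> Pi I (\<lambda>i. {..<n i}) \<Longrightarrow> complete_states I c \<in> Pi {1..k} (\<lambda>i. block_states (n i))"
  by (auto simp: complete_states_def block_states_def Pi_iff)

lemma star_graph_eqD:
  assumes "3 \<le> k" "\<And>i. i \<in> {1..k} \<Longrightarrow> 2 \<le> n i"
    and "j \<in> {1..k}" "f \<in> Pi ({1..k} - {j}) leaf_states"
    and "j' \<in> {1..k}" "f' \<in> Pi ({1..k} - {j'}) leaf_states"
    and "star_graph j f = star_graph j' f'"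
  shows "j = j'" and "\<And>l. l \<in> {1..k} - {j} \<Longrightarrow> f l = f' l"
proof -
  have eqD: "(l = j \<or> m = j) = (l = j' \<or> m = j')"
    "l = j \<or> m = j \<Longrightarrow> star_states j f l = star_states j' f' l"
    if "l \<in> {1..k}" "m \<in> {1..k}" "l \<noteq> m" for l m
    using block_graph_eqD[OF assms(7)[unfolded star_graph_def] symp_star_quotient
        symp_star_quotient assms(2) star_states_in_block_states[OF assms(4)]
        star_states_in_block_states[OF assms(6)] that]
    by blast+
  show "j = j'"
  proof (rule ccontr)
    assume "j \<noteq> j'"
    obtain m where "m \<in> {1..k}" "m \<noteq> j" "m \<noteq> j'"
      using ex_index_avoiding[OF assms(1)] by blast
    then show False
      using eqD(1)[OF assms(3) \<open>m \<in> {1..k}\<close>] \<open>j \<noteq> j'\<close> by auto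
  qed
  show "f l = f' l" if "l \<in> {1..k} - {j}" for l
    using eqD(2)[of l j] that assms(3) \<open>j = j'\<close> by (auto simp: star_states_def)
qed

lemma star_graph_neq_complete_graph:
  assumes "3 \<le> k" "\<And>i. i \<in> {1..k} \<Longrightarrow> 2 \<le> n i"
    and "f \<in> Pi ({1..k} - {j}) leaf_states" "c \<in> Pi I (\<lambda>i. {..<n i})"
  shows "star_graph j f \<noteq> complete_graph I c"
proof
  assume eq: "star_graph j f = complete_graph I c"
  obtain l where l: "l \<in> {1..k}" "l \<noteq> j"
    using ex_index_avoiding[OF assms(1)] by blast
  obtain m where m: "m \<in> {1..k}" "m \<noteq> j" "m \<noteq> l"
    using ex_index_avoiding[OF assms(1)] by blast
  show False
    using block_graph_eqD(1)[OF eq[unfolded star_graph_def complete_graph_def]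
        symp_star_quotient symp_complete_quotient assms(2) star_states_in_block_states[OF assms(3)]
        complete_states_in_block_states[OF assms(4)] l(1) m(1)] l m
    by auto
qed

lemma complete_graph_eqD:
  assumes "3 \<le> k" "\<And>i. i \<in> {1..k} \<Longrightarrow> 2 \<le> n i"
    and "I \<subseteq> {1..k}" "c \<in> Pi I (\<lambda>i. {..<n i})" "I' \<subseteq> {1..k}" "c' \<in> Pi I' (\<lambda>i. {..<n i})"
    and "complete_graph I c = complete_graph I' c'"
  shows "I = I'" and "\<And>i. i \<in> I \<Longrightarrow> c i = c' i"
proof -
  have states: "complete_states I c l = complete_states I' c' l" if "l \<in> {1..k}" for l
  proof -
    obtain m where "m \<in> {1..k}" "m \<noteq> l"
      using ex_index_avoiding[OF assms(1)] by blast
    then show ?thesis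
      using block_graph_eqD(2)[OF assms(7)[unfolded complete_graph_def]
          symp_complete_quotient symp_complete_quotient assms(2)
          complete_states_in_block_states[OF assms(4)] complete_states_in_block_states[OF assms(6)]
          that]
      by auto
  qed
  have "l \<in> I \<longleftrightarrow> l \<in> I'" if "l \<in> {1..k}" for l
    using states[OF that] unfolding complete_states_def by (auto split: if_splits)
  then show "I = I'"
    using assms(3,5) by blast
  then show "c i = c' i" if "i \<in> I" for i
    using states[of i] that assms(3) unfolding complete_states_def by auto
qed

definition star_params :: "(nat \<times> (nat \<Rightarrow> block)) set" where
  "star_params = (SIGMA j:{1..k}. PiE ({1..k} - {j}) leaf_states)"

definition complete_params :: "(nat set \<times> (nat \<Rightarrow> nat)) set" where
  "complete_params = (SIGMA I:odd_subsets. PiE I (\<lambda>i. {..<n i}))"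

lemma finite_odd_subsets: "finite odd_subsets"
  unfolding odd_subsets_def by (rule finite_subset[of _ "Pow {1..k}"]) auto

lemma finite_odd_subset: "I \<in> odd_subsets \<Longrightarrow> finite I"
  unfolding odd_subsets_def by (auto intro: finite_subset)

lemma finite_star_params: "finite star_params"
  unfolding star_params_def
  by (intro finite_SigmaI finite_PiE) (auto simp: leaf_states_def)

lemma finite_complete_params: "finite complete_params"
  unfolding complete_params_def
  by (intro finite_SigmaI finite_PiE finite_odd_subsets) (auto dest: finite_odd_subset)

lemma card_leaf_states: "card (leaf_states l) = n l + 1"
  unfolding leaf_states_def by (subst card_insert_disjoint) (auto simp: card_image inj_on_def)

lemma card_star_params: "card star_params = (\<Sum>j = 1..k. \<Prod>i \<in> {1..k} - {j}. n i + 1)"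
proof -
  have "card star_params = (\<Sum>j = 1..k. card (PiE ({1..k} - {j}) leaf_states))"
    unfolding star_params_def
    by (rule card_SigmaI) (auto simp: leaf_states_def intro!: finite_PiE)
  also have "\<dots> = (\<Sum>j = 1..k. \<Prod>i \<in> {1..k} - {j}. n i + 1)"
    by (simp add: card_PiE card_leaf_states)
  finally show ?thesis .
qed

lemma card_complete_params: "card complete_params = (\<Sum>I \<in> odd_subsets. \<Prod>i\<in>I. n i)"
proof -
  have "card complete_params = (\<Sum>I \<in> odd_subsets. card (PiE I (\<lambda>i. {..<n i})))"
    unfolding complete_params_def using finite_odd_subset
    by (intro card_SigmaI finite_odd_subsets) (auto intro: finite_PiE)
  also have "\<dots> = (\<Sum>I \<in> odd_subsets. \<Prod>i\<in>I. n i)"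
    using finite_odd_subset by (intro sum.cong) (auto simp: card_PiE)
  finally show ?thesis .
qed

lemma star_graphs_eq_image: "star_graphs = case_prod star_graph ` star_params"
proof
  show "star_graphs \<subseteq> case_prod star_graph ` star_params"
  proof
    fix F assume "F \<in> star_graphs"
    then obtain j f where "F = star_graph j f" "j \<in> {1..k}" "f \<in> Pi ({1..k} - {j}) leaf_states"
      unfolding star_graphs_def by blast
    moreover have "star_graph j f = star_graph j (restrict f ({1..k} - {j}))"
      by (rule star_graph_cong) simp
    ultimately show "F \<in> case_prod star_graph ` star_params"
      unfolding star_params_def
      by (intro rev_image_eqI[where x = "(j, restrict f ({1..k} - {j}))"]) auto
  qed
  show "case_prod star_graph ` star_params \<subseteq> star_graphs"
    unfolding star_graphs_def star_params_def PiE_def by fastforce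
qed

lemma complete_graphs_eq_image: "complete_graphs = case_prod complete_graph ` complete_params"
proof
  show "complete_graphs \<subseteq> case_prod complete_graph ` complete_params"
  proof
    fix F assume "F \<in> complete_graphs"
    then obtain I c where "F = complete_graph I c" "I \<in> odd_subsets" "c \<in> Pi I (\<lambda>i. {..<n i})"
      unfolding complete_graphs_def by blast
    moreover have "complete_graph I c = complete_graph I (restrict c I)"
      by (rule complete_graph_cong) simp
    ultimately show "F \<in> case_prod complete_graph ` complete_params"
      unfolding complete_params_def by (intro rev_image_eqI[where x = "(I, restrict c I)"]) auto
  qed
  show "case_prod complete_graph ` complete_params \<subseteq> complete_graphs"
    unfolding complete_graphs_def complete_params_def PiE_def by fastforce
qed

lemma finite_star_graphs: "finite star_graphs"
  unfolding star_graphs_eq_image using finite_star_params by simp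

lemma finite_complete_graphs: "finite complete_graphs"
  unfolding complete_graphs_eq_image using finite_complete_params by simp

lemma inj_on_star_graph:
  assumes "3 \<le> k" "\<And>i. i \<in> {1..k} \<Longrightarrow> 2 \<le> n i"
  shows "inj_on (case_prod star_graph) star_params"
proof (rule inj_onI, clarify)
  fix j f j' f'
  assume "(j, f) \<in> star_params" "(j', f') \<in> star_params"
    and eq: "star_graph j f = star_graph j' f'"
  then have j: "j \<in> {1..k}" "f \<in> PiE ({1..k} - {j}) leaf_states"
    and j': "j' \<in> {1..k}" "f' \<in> PiE ({1..k} - {j'}) leaf_states"
    unfolding star_params_def by auto
  have "f \<in> Pi ({1..k} - {j}) leaf_states" "f' \<in> Pi ({1..k} - {j'}) leaf_states"
    using j(2) j'(2) by (auto simp: PiE_iff)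
  then have "j = j'" "\<And>l. l \<in> {1..k} - {j} \<Longrightarrow> f l = f' l"
    using star_graph_eqD[OF assms j(1) _ j'(1) _ eq] by blast+
  then show "j = j' \<and> f = f'"
    using PiE_ext[OF j(2), of f'] j'(2) by auto
qed

lemma inj_on_complete_graph:
  assumes "3 \<le> k" "\<And>i. i \<in> {1..k} \<Longrightarrow> 2 \<le> n i"
  shows "inj_on (case_prod complete_graph) complete_params"
proof (rule inj_onI, clarify)
  fix I c I' c'
  assume "(I, c) \<in> complete_params" "(I', c') \<in> complete_params"
    and eq: "complete_graph I c = complete_graph I' c'"
  then have I: "I \<subseteq> {1..k}" "c \<in> PiE I (\<lambda>i. {..<n i})"
    and I': "I' \<subseteq> {1..k}" "c' \<in> PiE I' (\<lambda>i. {..<n i})"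
    unfolding complete_params_def odd_subsets_def by auto
  have "c \<in> Pi I (\<lambda>i. {..<n i})" "c' \<in> Pi I' (\<lambda>i. {..<n i})"
    using I(2) I'(2) by (auto simp: PiE_iff)
  then have "I = I'" "\<And>i. i \<in> I \<Longrightarrow> c i = c' i"
    using complete_graph_eqD[OF assms I(1) _ I'(1) _ eq] by blast+
  then show "I = I' \<and> c = c'"
    using PiE_ext[OF I(2), of c'] I'(2) by auto
qed

lemma star_graphs_Int_complete_graphs:
  assumes "3 \<le> k" "\<And>i. i \<in> {1..k} \<Longrightarrow> 2 \<le> n i"
  shows "star_graphs \<inter> complete_graphs = {}"
  unfolding star_graphs_def complete_graphs_def
  using star_graph_neq_complete_graph[OF assms] by blast

end

theorem theorem8:
  fixes k r :: nat and n :: "nat \<Rightarrow> nat"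
  assumes "k \<ge> 3" and "\<And>i. i \<in> {1..k} \<Longrightarrow> n i \<ge> 2" and "r \<in> {1..k}"
  shows "card (lc_orbit (cs_vertices k n) (clique_star k n r)) =
           (\<Sum>I \<in> {I. I \<subseteq> {1..k} \<and> odd (card I)}. \<Prod>i\<in>I. n i)
         + (\<Sum>j = 1..k. \<Prod>i \<in> {1..k} - {j}. n i + 1)"
proof -
  have "\<And>i. i \<in> {1..k} \<Longrightarrow> 0 < n i"
    using assms(2) by fastforce
  then have orbit: "lc_orbit (cs_vertices k n) (clique_star k n r) =
                      star_graphs k n \<union> complete_graphs k n"
    using assms(3) by (rule lc_orbit_clique_star_eq)
  have star: "card (star_graphs k n) = card (star_params k n)"
    unfolding star_graphs_eq_image using inj_on_star_graph[OF assms(1,2)] by (rule card_image)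
  have complete: "card (complete_graphs k n) = card (complete_params k n)"
    unfolding complete_graphs_eq_image using inj_on_complete_graph[OF assms(1,2)]
    by (rule card_image)
  have "card (lc_orbit (cs_vertices k n) (clique_star k n r)) =
          card (complete_graphs k n) + card (star_graphs k n)"
    unfolding orbit
    using finite_star_graphs finite_complete_graphs star_graphs_Int_complete_graphs[OF assms(1,2)]
    by (simp add: card_Un_disjoint)
  then show ?thesis
    unfolding star complete card_star_params card_complete_params odd_subsets_def .
qed

end
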